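(* Let $\rho_r\in(0,1)$, and let $R>\lambda>\rho_r$ be constants. Let $C\subseteq\{0,1\}^n$ consist of $2^{Rn}$ independent uniformly random vectors, partitioned into $2^{R'n}$ blocks $A_s$ ($s\in\{0,1\}^{R'n}$) of $2^\ell$ vectors each, where $\ell=\lambda n$ and $R'n=Rn-\ell$, and let $C_\Pi$ be the stochastic code encoding message $s$ as a uniformly random element of $A_s$. Then there is $\delta>0$ such that, with probability $1-e^{-\Omega(n)}$ over the choice of $C$, \[\mathrm{Sem}(C_\Pi)=\max_{P_{\mathbf S},\mathscr S}I\bigl(\mathbf S;\mathbf V(\mathscr S)\bigr)\le e^{-n\delta},\] where the maximum is over all distributions $P_{\mathbf S}$ on messages and all $\mathscr S\subseteq[n]$ with $|\mathscr S|=\rho_r n$.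
   Context: For a message $\mathbf S\sim P_{\mathbf S}$ with random encoding $\mathbf X$, and $\mathscr S\subseteq[n]$, $\mathbf V(\mathscr S)\in\{0,1,?\}^n$ is the string equal to $\mathbf X$ on coordinates in $\mathscr S$ and $?$ elsewhere. *)

theory Defs
  imports "HOL-Probability.Probability"
begin

text \<open>Binary vectors of length n are bool lists of length n. Coordinates are 0..n-1.\<close>

definition bin_vectors :: "nat \<Rightarrow> bool list set" where
  "bin_vectors n = {xs. length xs = n}"

text \<open>A code of 2^m blocks with 2^l vectors each: C s j is the j-th vector of block A_s.
  The set of all such codes; the uniform distribution on it makes all 2^(m+l) vectors
  independent and uniform.\<close>

definition codes :: "nat \<Rightarrow> nat \<Rightarrow> nat \<Rightarrow> (nat \<Rightarrow> nat \<Rightarrow> bool list) set" where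
  "codes n m l = ({..<2^m} \<rightarrow>\<^sub>E ({..<2^l} \<rightarrow>\<^sub>E bin_vectors n))"

text \<open>V(S): equal to x on coordinates in S and '?' (None) elsewhere.\<close>

definition reveal :: "nat \<Rightarrow> nat set \<Rightarrow> bool list \<Rightarrow> bool option list" where
  "reveal n S x = map (\<lambda>i. if i \<in> S then Some (x ! i) else None) [0..<n]"

definition mutual_info_pmf :: "('a \<times> 'b) pmf \<Rightarrow> real" where
  "mutual_info_pmf J = (\<Sum>ab\<in>set_pmf J. pmf J ab *
      log 2 (pmf J ab / (pmf (map_pmf fst J) (fst ab) * pmf (map_pmf snd J) (snd ab))))"

definition joint_SV :: "nat \<Rightarrow> nat \<Rightarrow> (nat \<Rightarrow> nat \<Rightarrow> bool list) \<Rightarrow> nat pmf \<Rightarrow> nat set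
    \<Rightarrow> (nat \<times> bool option list) pmf" where
  "joint_SV n l C PS S =
     do { s \<leftarrow> PS; j \<leftarrow> pmf_of_set {..<2^l}; return_pmf (s, reveal n S (C s j)) }"

text \<open>Semantic leakage: sup over message distributions on {0,1}^m (identified with
  {..<2^m}) and coordinate sets of size r.\<close>

definition Sem :: "nat \<Rightarrow> nat \<Rightarrow> nat \<Rightarrow> nat \<Rightarrow> (nat \<Rightarrow> nat \<Rightarrow> bool list) \<Rightarrow> real" where
  "Sem n m l r C = (SUP p \<in> {(PS, S). set_pmf PS \<subseteq> {..<2^m} \<and> S \<subseteq> {..<n} \<and> card S = r}.
       mutual_info_pmf (joint_SV n l C (fst p) (snd p)))"

end

theory Submission
  imports Defs "HOL-Real_Asymp.Real_Asymp"
begin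

(* Call a code balanced if, in every block A_s and for every set S of r coordinates, each pattern
   that V(S) can show is produced by between (1 - e) 2^l / 2^r and (1 + e) 2^l / 2^r of the 2^l
   vectors of A_s.  Then, whatever the message, the law of V(S) is within a factor (1 + e)/(1 - e)
   of its average over messages, so I(S; V(S)) <= log2 ((1 + e)/(1 - e)) for every message
   distribution.  For a random code each pattern count is binomial with mean 2^(l - r), so a
   multiplicative Chernoff bound and a union bound over the at most 2^(m + 2n) triples
   (s, S, pattern) show that the code fails to be balanced with probability at most
   2^(m + 2n + 1) exp (- 2^(l - r) e^2 / 4).  As l - r >= (lam - rho) n - 1, the choice
   e = exp (- 2 delta n) with delta = (lam - rho) ln 2 / 8 makes the leakage smaller than
   exp (- delta n) while the failure probability is doubly exponentially small. *)

lemma exp_le_1_plus_self_plus_square: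
  fixes t :: real
  assumes "\<bar>t\<bar> \<le> 1"
  shows "exp t \<le> 1 + t + t\<^sup>2"
proof (cases "0 \<le> t")
  case True
  then show ?thesis using assms exp_bound[of t] by simp
next
  case False
  define u where "u = - t"
  have u: "0 < u" "u \<le> 1" using False assms by (auto simp: u_def)
  have "exp (- u) * (1 + u) \<le> 1"
    using exp_ge_add_one_self[of u] by (simp add: exp_minus field_simps)
  also have "\<dots> \<le> (1 - u + u\<^sup>2) * (1 + u)"
    using u by (simp add: algebra_simps power2_eq_square)
  finally have "exp (- u) \<le> 1 - u + u\<^sup>2"
    using u by (simp add: mult_le_cancel_right)
  then show ?thesis by (simp add: u_def)
qed

lemma expectation_exp_binomial_pmf:
  assumes p: "p \<in> {0..1}"
  shows "measure_pmf.expectation (binomial_pmf n p) (\<lambda>k. exp (t * real k)) = (1 + p * (exp t - 1)) ^ n"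
proof -
  have exp_card: "exp (t * real (card {i\<in>{..<n}. f i})) = (\<Prod>i<n. if f i then exp t else 1)" for f
    by (simp add: prod.If_cases Int_def exp_of_nat_mult[symmetric] mult.commute)
  have "binomial_pmf n p
      = map_pmf (\<lambda>f. card {i\<in>{..<n}. f i}) (Pi_pmf {..<n} False (\<lambda>_. bernoulli_pmf p))"
    using binomial_pmf_altdef'[of "{..<n}" n p False] p by simp
  then have "measure_pmf.expectation (binomial_pmf n p) (\<lambda>k. exp (t * real k)) =
      measure_pmf.expectation (Pi_pmf {..<n} False (\<lambda>_. bernoulli_pmf p))
        (\<lambda>f. exp (t * real (card {i\<in>{..<n}. f i})))"
    by (simp only: integral_map_pmf)
  also have "\<dots> = measure_pmf.expectation (Pi_pmf {..<n} False (\<lambda>_. bernoulli_pmf p))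
        (\<lambda>f. \<Prod>i<n. if f i then exp t else 1)"
    by (simp only: exp_card)
  also have "\<dots> = (\<Prod>i<n. measure_pmf.expectation (bernoulli_pmf p) (\<lambda>b. if b then exp t else 1))"
    by (rule expectation_prod_Pi_pmf) (auto intro: integrable_measure_pmf_finite)
  also have "\<dots> = (1 + p * (exp t - 1)) ^ n"
    using p by (simp add: algebra_simps)
  finally show ?thesis .
qed

lemma prob_binomial_pmf_mgf_bound:
  assumes p: "p \<in> {0..1}"
  shows "measure_pmf.prob (binomial_pmf n p) {k. t * a \<le> t * real k}
    \<le> exp (n * p * (exp t - 1) - t * a)"
proof -
  have "measure_pmf.prob (binomial_pmf n p) {k. t * a \<le> t * real k} =
      measure_pmf.prob (binomial_pmf n p) {k \<in> space (binomial_pmf n p). exp (t * a) \<le> exp (t * real k)}"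
    by simp
  also have "\<dots> \<le> measure_pmf.expectation (binomial_pmf n p) (\<lambda>k. exp (t * real k)) / exp (t * a)"
    using p by (intro integral_Markov_inequality_measure) (auto intro: integrable_measure_pmf_finite)
  also have "\<dots> \<le> exp (p * (exp t - 1)) ^ n / exp (t * a)"
    unfolding expectation_exp_binomial_pmf[OF p]
  proof (intro divide_right_mono power_mono)
    have "0 \<le> (1 - p) + p * exp t"
      using p by simp
    then show "0 \<le> 1 + p * (exp t - 1)"
      by (simp add: algebra_simps)
  qed (use exp_ge_add_one_self[of "p * (exp t - 1)"] in auto)
  also have "\<dots> = exp (n * p * (exp t - 1) - t * a)"
    by (simp add: exp_diff exp_of_nat_mult[symmetric] mult.assoc)
  finally show ?thesis .
qed

lemma prob_binomial_pmf_relative_abs_ge: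
  assumes p: "p \<in> {0..1}" and e: "0 < e" "e \<le> 1"
  shows "measure_pmf.prob (binomial_pmf n p) {k. e * (n * p) \<le> \<bar>real k - n * p\<bar>}
    \<le> 2 * exp (- (n * p) * e\<^sup>2 / 4)"
proof -
  define \<mu> where "\<mu> = n * p"
  have "\<mu> \<ge> 0" using p by (simp add: \<mu>_def)
  have one_sided: "measure_pmf.prob (binomial_pmf n p) {k. e * \<mu> \<le> \<sigma> * (real k - \<mu>)}
      \<le> exp (- \<mu> * e\<^sup>2 / 4)" if \<sigma>: "\<sigma> = 1 \<or> \<sigma> = -1" for \<sigma> :: real
  proof -
    define t where "t = \<sigma> * e / 2"
    have "t * (\<mu> + \<sigma> * e * \<mu>) - t * x = e / 2 * (e * \<mu> - \<sigma> * (x - \<mu>))" for x :: real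
      using \<sigma> by (auto simp: t_def algebra_simps)
    then have "t * (\<mu> + \<sigma> * e * \<mu>) \<le> t * x \<longleftrightarrow> e / 2 * (e * \<mu> - \<sigma> * (x - \<mu>)) \<le> 0" for x :: real
      by (metis diff_le_0_iff_le)
    also have "\<dots> x \<longleftrightarrow> e * \<mu> \<le> \<sigma> * (x - \<mu>)" for x :: real
      using e by (simp add: mult_le_0_iff)
    finally have "{k. e * \<mu> \<le> \<sigma> * (real k - \<mu>)} = {k. t * (\<mu> + \<sigma> * e * \<mu>) \<le> t * real k}"
      by simp
    then have "measure_pmf.prob (binomial_pmf n p) {k. e * \<mu> \<le> \<sigma> * (real k - \<mu>)}
        \<le> exp (\<mu> * (exp t - 1) - t * (\<mu> + \<sigma> * e * \<mu>))"
      using prob_binomial_pmf_mgf_bound[OF p, of n t "\<mu> + \<sigma> * e * \<mu>"] by (simp add: \<mu>_def)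
    also have "\<dots> \<le> exp (\<mu> * (t + t\<^sup>2) - t * (\<mu> + \<sigma> * e * \<mu>))"
      using exp_le_1_plus_self_plus_square[of t] \<sigma> e \<open>\<mu> \<ge> 0\<close>
      by (auto simp: t_def intro!: mult_left_mono)
    also have "\<dots> = exp (- \<mu> * e\<^sup>2 / 4)"
      using \<sigma> by (auto simp: t_def power2_eq_square algebra_simps)
    finally show ?thesis .
  qed
  have "{k. e * \<mu> \<le> \<bar>real k - \<mu>\<bar>} = {k. e * \<mu> \<le> 1 * (real k - \<mu>)} \<union> {k. e * \<mu> \<le> -1 * (real k - \<mu>)}"
    by auto
  then have "measure_pmf.prob (binomial_pmf n p) {k. e * \<mu> \<le> \<bar>real k - \<mu>\<bar>}
      \<le> measure_pmf.prob (binomial_pmf n p) {k. e * \<mu> \<le> 1 * (real k - \<mu>)}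
        + measure_pmf.prob (binomial_pmf n p) {k. e * \<mu> \<le> -1 * (real k - \<mu>)}"
    by (simp add: measure_Un_le)
  also have "\<dots> \<le> 2 * exp (- \<mu> * e\<^sup>2 / 4)"
    using one_sided[of 1] one_sided[of "-1"] by simp
  finally show ?thesis by (simp add: \<mu>_def)
qed

lemma map_pmf_count_Pi_pmf:
  assumes "finite A"
  shows "map_pmf (\<lambda>f. card {x\<in>A. P (f x)}) (Pi_pmf A d (\<lambda>_. q))
    = binomial_pmf (card A) (measure_pmf.prob q {y. P y})"
proof -
  have "map_pmf P q = bernoulli_pmf (measure_pmf.prob q {y. P y})"
  proof (rule pmf_eqI)
    fix b :: bool
    show "pmf (map_pmf P q) b = pmf (bernoulli_pmf (measure_pmf.prob q {y. P y})) b"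
      using measure_pmf.prob_compl[of "{y. P y}" q]
      by (cases b) (simp_all add: pmf_map vimage_def set_diff_eq)
  qed
  then have "binomial_pmf (card A) (measure_pmf.prob q {y. P y})
      = map_pmf (\<lambda>g. card {x\<in>A. g x}) (Pi_pmf A (P d) (\<lambda>_. map_pmf P q))"
    using assms by (simp add: binomial_pmf_altdef')
  also have "\<dots> = map_pmf (\<lambda>f. card {x\<in>A. P (f x)}) (Pi_pmf A d (\<lambda>_. q))"
    using assms by (simp add: Pi_pmf_map map_pmf_comp)
  finally show ?thesis ..
qed

lemma pmf_bind_Pair:
  "pmf (p \<bind> (\<lambda>s. map_pmf (Pair s) (K s))) (a, b) = pmf p a * pmf (K a) b"
proof -
  have "Pair s -` {(a, b)} = (if s = a then {b} else {})" for s
    by auto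
  then have "pmf (map_pmf (Pair s) (K s)) (a, b) = pmf (K a) b * indicator {a} s" for s
    by (simp add: pmf_map measure_pmf_single)
  then show ?thesis
    by (simp add: pmf_bind measure_pmf_single mult.commute)
qed

lemma pmf_bind_ge:
  assumes "\<And>s. s \<in> set_pmf p \<Longrightarrow> x \<le> pmf (K s) b"
  shows "x \<le> pmf (p \<bind> K) b"
proof -
  have "integrable p (\<lambda>s. pmf (K s) b)"
    by (rule measure_pmf.integrable_const_bound[where B = 1]) (simp_all add: pmf_le_1)
  then show ?thesis
    unfolding pmf_bind using assms by (intro measure_pmf.integral_ge_const) (auto intro: AE_pmfI)
qed

lemma mutual_info_pmf_bind_Pair_le:
  assumes ratio: "\<And>s s' b. s \<in> set_pmf p \<Longrightarrow> s' \<in> set_pmf p \<Longrightarrow> b \<in> set_pmf (K s)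
      \<Longrightarrow> pmf (K s) b \<le> c * pmf (K s') b"
  shows "mutual_info_pmf (p \<bind> (\<lambda>s. map_pmf (Pair s) (K s))) \<le> log 2 c"
proof -
  define J where "J = p \<bind> (\<lambda>s. map_pmf (Pair s) (K s))"
  have fst_J: "map_pmf fst J = p"
    by (simp add: J_def map_bind_pmf map_pmf_comp bind_return_pmf' flip: map_pmf_def)
  have snd_J: "map_pmf snd J = p \<bind> K"
    by (simp add: J_def map_bind_pmf map_pmf_comp)
  have "1 \<le> c"
  proof -
    obtain s where "s \<in> set_pmf p"
      using set_pmf_not_empty by fast
    moreover obtain b where "b \<in> set_pmf (K s)"
      using set_pmf_not_empty by fast
    ultimately show ?thesis
      using ratio[of s s b] by (simp add: pmf_positive)
  qed
  have term_le: "pmf J ab * log 2 (pmf J ab / (pmf (map_pmf fst J) (fst ab) * pmf (map_pmf snd J) (snd ab)))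
      \<le> pmf J ab * log 2 c" if "ab \<in> set_pmf J" for ab
  proof -
    obtain a b where ab: "ab = (a, b)"
      by (cases ab)
    with that have "a \<in> set_pmf p" "b \<in> set_pmf (K a)"
      by (auto simp: J_def)
    have pos: "0 < pmf p a" "0 < pmf (K a) b" "0 < pmf (p \<bind> K) b"
      using \<open>a \<in> set_pmf p\<close> \<open>b \<in> set_pmf (K a)\<close> by (auto intro!: pmf_positive)
    have "pmf (K a) b / c \<le> pmf (p \<bind> K) b"
      using ratio[OF \<open>a \<in> set_pmf p\<close> _ \<open>b \<in> set_pmf (K a)\<close>] \<open>1 \<le> c\<close>
      by (intro pmf_bind_ge) (simp add: field_simps)
    moreover have "pmf J ab / (pmf p a * pmf (p \<bind> K) b) = pmf (K a) b / pmf (p \<bind> K) b"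
      using pos by (simp add: ab J_def pmf_bind_Pair)
    ultimately have "pmf J ab / (pmf p a * pmf (p \<bind> K) b) \<le> c"
         "0 < pmf J ab / (pmf p a * pmf (p \<bind> K) b)"
      using pos \<open>1 \<le> c\<close> by (simp_all add: field_simps)
    then show ?thesis
      using fst_J snd_J ab by (simp add: mult_left_mono)
  qed
  show ?thesis
  proof (cases "finite (set_pmf J)")
    case True
    have "mutual_info_pmf J \<le> (\<Sum>ab\<in>set_pmf J. pmf J ab * log 2 c)"
      unfolding mutual_info_pmf_def by (rule sum_mono) (rule term_le)
    also have "\<dots> = log 2 c"
      using True by (simp add: sum_distrib_right[symmetric] sum_pmf_eq_1)
    finally show ?thesis
      unfolding J_def .
  next
    case False
    \<comment> \<open>\<open>mutual_info_pmf\<close> sums over the support, so it is 0 here\<close>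
    then show ?thesis
      using \<open>1 \<le> c\<close> by (simp add: mutual_info_pmf_def J_def)
  qed
qed

lemma
  fixes x :: real
  shows nat_floor_ge: "x - 1 \<le> real (nat \<lfloor>x\<rfloor>)"
    and nat_floor_le: "0 \<le> x \<Longrightarrow> real (nat \<lfloor>x\<rfloor>) \<le> x"
  by linarith+

lemma finite_bin_vectors: "finite (bin_vectors n)"
  using finite_lists_length_eq[of "UNIV :: bool set" n] by (simp add: bin_vectors_def)

lemma bin_vectors_nonempty: "bin_vectors n \<noteq> {}"
  by (auto simp: bin_vectors_def intro: exI[of _ "replicate n False"])

lemma card_bin_vectors_fixed:
  assumes "S \<subseteq> {..<n}"
  shows "card {x \<in> bin_vectors n. \<forall>i\<in>S. x ! i = w i} = 2 ^ (n - card S)"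
proof -
  define B where "B i = (if i \<in> S then {w i} else UNIV)" for i
  have bij: "bij_betw (\<lambda>f. map f [0..<n]) (\<Pi>\<^sub>E i\<in>{..<n}. B i) {x \<in> bin_vectors n. \<forall>i\<in>S. x ! i = w i}"
  proof (rule bij_betw_byWitness[where f' = "\<lambda>x. restrict ((!) x) {..<n}"])
    show "\<forall>f\<in>\<Pi>\<^sub>E i\<in>{..<n}. B i. restrict ((!) (map f [0..<n])) {..<n} = f"
      by (metis (no_types, lifting) PiE_restrict add_0 diff_zero length_upt lessThan_iff nth_map
          nth_upt restrict_ext)
    show "\<forall>x\<in>{x \<in> bin_vectors n. \<forall>i\<in>S. x ! i = w i}. map (restrict ((!) x) {..<n}) [0..<n] = x"
      by (auto simp: bin_vectors_def intro: nth_equalityI)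
    show "(\<lambda>f. map f [0..<n]) ` (\<Pi>\<^sub>E i\<in>{..<n}. B i) \<subseteq> {x \<in> bin_vectors n. \<forall>i\<in>S. x ! i = w i}"
    proof (intro image_subsetI CollectI conjI ballI)
      fix f
      assume f: "f \<in> (\<Pi>\<^sub>E i\<in>{..<n}. B i)"
      show "map f [0..<n] \<in> bin_vectors n"
        by (simp add: bin_vectors_def)
      fix i
      assume "i \<in> S"
      have "i < n"
        using assms \<open>i \<in> S\<close> by auto
      then have "f i \<in> B i"
        using f by (simp add: PiE_iff)
      then show "map f [0..<n] ! i = w i"
        using \<open>i < n\<close> \<open>i \<in> S\<close> by (simp add: B_def)
    qed
    show "(\<lambda>x. restrict ((!) x) {..<n}) ` {x \<in> bin_vectors n. \<forall>i\<in>S. x ! i = w i} \<subseteq> (\<Pi>\<^sub>E i\<in>{..<n}. B i)"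
      by (auto simp: B_def)
  qed
  have "card {x \<in> bin_vectors n. \<forall>i\<in>S. x ! i = w i} = (\<Prod>i<n. card (B i))"
    using bij_betw_same_card[OF bij] by (simp add: card_PiE)
  also have "\<dots> = (\<Prod>i\<in>{..<n} - S. 2)"
    by (rule prod.mono_neutral_cong_right) (auto simp: B_def)
  also have "\<dots> = 2 ^ (n - card S)"
    using assms by (simp add: card_Diff_subset finite_subset)
  finally show ?thesis .
qed

lemma card_bin_vectors: "card (bin_vectors n) = 2 ^ n"
  using card_bin_vectors_fixed[of "{}" n] by simp

lemma reveal_eq_iff:
  assumes "S \<subseteq> {..<n}"
  shows "reveal n S x = reveal n S y \<longleftrightarrow> (\<forall>i\<in>S. x ! i = y ! i)"
  using assms by (auto simp: reveal_def map_eq_conv)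

lemma prob_reveal_eq:
  assumes S: "S \<subseteq> {..<n}"
  shows "measure_pmf.prob (pmf_of_set (bin_vectors n)) {x. reveal n S x = reveal n S y} = 1 / 2 ^ card S"
proof -
  have "card S \<le> n"
    using card_mono[OF _ S] by simp
  have "bin_vectors n \<inter> {x. reveal n S x = reveal n S y} = {x \<in> bin_vectors n. \<forall>i\<in>S. x ! i = y ! i}"
    using reveal_eq_iff[OF S] by auto
  then have "measure_pmf.prob (pmf_of_set (bin_vectors n)) {x. reveal n S x = reveal n S y}
      = 2 ^ (n - card S) / 2 ^ n"
    using card_bin_vectors_fixed[OF S]
    by (simp add: measure_pmf_of_set finite_bin_vectors bin_vectors_nonempty card_bin_vectors)
  also have "\<dots> = 1 / 2 ^ card S"
    using \<open>card S \<le> n\<close> by (simp add: power_diff)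
  finally show ?thesis .
qed

lemma pmf_of_set_PiE:
  assumes "finite A" "\<And>x. x \<in> A \<Longrightarrow> finite (B x)" "\<And>x. x \<in> A \<Longrightarrow> B x \<noteq> {}"
  shows "pmf_of_set (PiE A B) = Pi_pmf A undefined (\<lambda>x. pmf_of_set (B x))"
proof -
  have "PiE_dflt A undefined B = PiE A B"
    by (auto simp: PiE_dflt_def PiE_def extensional_def)
  then show ?thesis
    using Pi_pmf_of_set[OF assms, where d = undefined] by simp
qed

lemma finite_codes: "finite (codes n m l)"
  unfolding codes_def by (intro finite_PiE) (auto simp: finite_bin_vectors)

lemma codes_nonempty: "codes n m l \<noteq> {}"
  unfolding codes_def by (auto simp: PiE_eq_empty_iff bin_vectors_nonempty)

lemma codes_in_bin_vectors:
  assumes "C \<in> codes n m l" "s < 2 ^ m" "j < 2 ^ l"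
  shows "C s j \<in> bin_vectors n"
  using assms by (auto simp: codes_def)

lemma map_pmf_block_pmf_of_set_codes:
  assumes "s < 2 ^ m"
  shows "map_pmf (\<lambda>C. C s) (pmf_of_set (codes n m l))
    = Pi_pmf {..<(2::nat) ^ l} undefined (\<lambda>_. pmf_of_set (bin_vectors n))"
proof -
  have "pmf_of_set (codes n m l)
      = Pi_pmf {..<2 ^ m} undefined (\<lambda>_. pmf_of_set ({..<2 ^ l} \<rightarrow>\<^sub>E bin_vectors n))"
    unfolding codes_def
    by (rule pmf_of_set_PiE)
      (auto simp: finite_bin_vectors PiE_eq_empty_iff bin_vectors_nonempty intro!: finite_PiE)
  also have "pmf_of_set ({..<(2::nat) ^ l} \<rightarrow>\<^sub>E bin_vectors n)
      = Pi_pmf {..<2 ^ l} undefined (\<lambda>_. pmf_of_set (bin_vectors n))"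
    by (rule pmf_of_set_PiE) (auto simp: finite_bin_vectors bin_vectors_nonempty)
  finally show ?thesis
    using assms by (simp add: Pi_pmf_component)
qed

definition pattern_count :: "nat \<Rightarrow> nat \<Rightarrow> (nat \<Rightarrow> nat \<Rightarrow> bool list) \<Rightarrow> nat \<Rightarrow> nat set
    \<Rightarrow> bool option list \<Rightarrow> nat" where
  "pattern_count n l C s S v = card {j \<in> {..<2 ^ l}. reveal n S (C s j) = v}"

lemma pattern_count_binomial:
  assumes "s < 2 ^ m" "S \<subseteq> {..<n}"
  shows "map_pmf (\<lambda>C. pattern_count n l C s S (reveal n S y)) (pmf_of_set (codes n m l))
    = binomial_pmf (2 ^ l) (1 / 2 ^ card S)"
proof -
  have "map_pmf (\<lambda>C. pattern_count n l C s S (reveal n S y)) (pmf_of_set (codes n m l))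
      = map_pmf (\<lambda>f. card {j \<in> {..<2 ^ l}. reveal n S (f j) = reveal n S y})
          (map_pmf (\<lambda>C. C s) (pmf_of_set (codes n m l)))"
    by (simp add: map_pmf_comp pattern_count_def)
  also have "\<dots> = binomial_pmf (card {..<(2::nat) ^ l})
      (measure_pmf.prob (pmf_of_set (bin_vectors n)) {x. reveal n S x = reveal n S y})"
    unfolding map_pmf_block_pmf_of_set_codes[OF assms(1)] by (rule map_pmf_count_Pi_pmf) simp
  finally show ?thesis
    using prob_reveal_eq[OF assms(2)] by simp
qed

lemma prob_pattern_count_deviates:
  fixes l :: nat
  assumes "s < 2 ^ m" "S \<subseteq> {..<n}" "0 < e" "e \<le> 1"
  defines "K \<equiv> 2 ^ l / 2 ^ card S"
  shows "measure_pmf.prob (pmf_of_set (codes n m l))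
      {C. e * K \<le> \<bar>real (pattern_count n l C s S (reveal n S y)) - K\<bar>}
    \<le> 2 * exp (- K * e\<^sup>2 / 4)"
proof -
  have "measure_pmf.prob (pmf_of_set (codes n m l))
      {C. e * K \<le> \<bar>real (pattern_count n l C s S (reveal n S y)) - K\<bar>}
    = measure_pmf.prob (binomial_pmf (2 ^ l) (1 / 2 ^ card S)) {k. e * K \<le> \<bar>real k - K\<bar>}"
    by (simp flip: pattern_count_binomial[OF assms(1,2), of l y])
  also have "\<dots> \<le> 2 * exp (- K * e\<^sup>2 / 4)"
    using prob_binomial_pmf_relative_abs_ge[of "1 / 2 ^ card S" e "2 ^ l"] assms by (simp add: K_def)
  finally show ?thesis .
qed

definition balanced_code
    :: "nat \<Rightarrow> nat \<Rightarrow> nat \<Rightarrow> nat \<Rightarrow> real \<Rightarrow> (nat \<Rightarrow> nat \<Rightarrow> bool list) \<Rightarrow> bool" where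
  "balanced_code n m l r e C \<longleftrightarrow>
     (\<forall>s<2 ^ m. \<forall>S. S \<subseteq> {..<n} \<and> card S = r \<longrightarrow> (\<forall>x\<in>bin_vectors n.
       \<bar>real (pattern_count n l C s S (reveal n S x)) - 2 ^ l / 2 ^ r\<bar> < e * (2 ^ l / 2 ^ r)))"

lemma balanced_codeD:
  assumes "balanced_code n m l r e C" "s < 2 ^ m" "S \<subseteq> {..<n}" "card S = r" "x \<in> bin_vectors n"
  shows "\<bar>real (pattern_count n l C s S (reveal n S x)) - 2 ^ l / 2 ^ r\<bar> < e * (2 ^ l / 2 ^ r)"
  using assms unfolding balanced_code_def by blast

lemma prob_not_balanced_code:
  assumes e: "0 < e" "e \<le> 1"
  shows "measure_pmf.prob (pmf_of_set (codes n m l)) {C. \<not> balanced_code n m l r e C}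
    \<le> 2 ^ (m + 2 * n) * (2 * exp (- (2 ^ l / 2 ^ r) * e\<^sup>2 / 4))"
proof -
  define D where "D = pmf_of_set (codes n m l)"
  define I where "I = {..<(2::nat) ^ m} \<times> {S. S \<subseteq> {..<n} \<and> card S = r} \<times> bin_vectors n"
  define U where "U = (\<lambda>(s, S, x). {C. e * (2 ^ l / 2 ^ r)
      \<le> \<bar>real (pattern_count n l C s S (reveal n S x)) - 2 ^ l / 2 ^ r\<bar>})"
  have "finite I"
    unfolding I_def by (auto intro: finite_bin_vectors finite_subset[of _ "Pow {..<n}"])
  have "card {S. S \<subseteq> {..<n} \<and> card S = r} \<le> card (Pow {..<n})"
    by (intro card_mono) auto
  then have "card I \<le> 2 ^ m * (2 ^ n * 2 ^ n)"
    by (simp add: I_def card_cartesian_product card_bin_vectors card_Pow)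
  also have "\<dots> = 2 ^ (m + 2 * n)"
    by (metis mult_2 power_add)
  finally have card_I: "real (card I) \<le> 2 ^ (m + 2 * n)"
    using of_nat_mono by fastforce
  have "{C. \<not> balanced_code n m l r e C} \<subseteq> (\<Union>i\<in>I. U i)"
  proof
    fix C
    assume "C \<in> {C. \<not> balanced_code n m l r e C}"
    then obtain s S x where "s < 2 ^ m" "S \<subseteq> {..<n}" "card S = r" "x \<in> bin_vectors n"
      and "e * (2 ^ l / 2 ^ r) \<le> \<bar>real (pattern_count n l C s S (reveal n S x)) - 2 ^ l / 2 ^ r\<bar>"
      unfolding balanced_code_def by (auto simp: not_less)
    then show "C \<in> (\<Union>i\<in>I. U i)"
      unfolding I_def U_def by blast
  qed
  then have "measure_pmf.prob D {C. \<not> balanced_code n m l r e C} \<le> measure_pmf.prob D (\<Union>i\<in>I. U i)"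
    by (intro measure_pmf.finite_measure_mono) auto
  also have "\<dots> \<le> (\<Sum>i\<in>I. measure_pmf.prob D (U i))"
    using \<open>finite I\<close> by (intro measure_pmf.finite_measure_subadditive_finite) auto
  also have "\<dots> \<le> (\<Sum>i\<in>I. 2 * exp (- (2 ^ l / 2 ^ r) * e\<^sup>2 / 4))"
    using prob_pattern_count_deviates[OF _ _ e] by (intro sum_mono) (auto simp: I_def U_def D_def)
  also have "\<dots> \<le> 2 ^ (m + 2 * n) * (2 * exp (- (2 ^ l / 2 ^ r) * e\<^sup>2 / 4))"
    using card_I by (simp add: mult_right_mono)
  finally show ?thesis
    unfolding D_def .
qed

lemma pmf_reveal_block:
  "pmf (map_pmf (\<lambda>j. reveal n S (C s j)) (pmf_of_set {..<(2::nat) ^ l})) v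
    = real (pattern_count n l C s S v) / 2 ^ l"
  by (simp add: pmf_map measure_pmf_of_set lessThan_empty_iff pattern_count_def vimage_def Int_def)

lemma mutual_info_joint_SV_le_if_balanced_code:
  assumes C: "C \<in> codes n m l" and bal: "balanced_code n m l r e C" and e: "0 < e" "e < 1"
    and PS: "set_pmf PS \<subseteq> {..<2 ^ m}" and S: "S \<subseteq> {..<n}" "card S = r"
  shows "mutual_info_pmf (joint_SV n l C PS S) \<le> log 2 ((1 + e) / (1 - e))"
proof -
  define K where "K s = map_pmf (\<lambda>j. reveal n S (C s j)) (pmf_of_set {..<(2::nat) ^ l})" for s
  have joint: "joint_SV n l C PS S = PS \<bind> (\<lambda>s. map_pmf (Pair s) (K s))"
    by (simp add: joint_SV_def K_def map_pmf_def bind_assoc_pmf bind_return_pmf)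
  have "pmf (K s) b \<le> (1 + e) / (1 - e) * pmf (K s') b"
    if s: "s \<in> set_pmf PS" and s': "s' \<in> set_pmf PS" and b: "b \<in> set_pmf (K s)" for s s' b
  proof -
    obtain j where "j < 2 ^ l" and b_eq: "b = reveal n S (C s j)"
      using b by (auto simp: K_def lessThan_empty_iff)
    have dev: "\<bar>real (pattern_count n l C t S b) - 2 ^ l / 2 ^ r\<bar> < e * (2 ^ l / 2 ^ r)"
      if "t \<in> set_pmf PS" for t
      using balanced_codeD[OF bal _ S codes_in_bin_vectors[OF C _ \<open>j < 2 ^ l\<close>]] PS s that b_eq
      by blast
    have "real (pattern_count n l C s S b) < (1 + e) * (2 ^ l / 2 ^ r)"
      using dev[OF s] unfolding abs_less_iff distrib_right by linarith
    also have "\<dots> = (1 + e) / (1 - e) * ((1 - e) * (2 ^ l / 2 ^ r))"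
      using e by simp
    also have "\<dots> \<le> (1 + e) / (1 - e) * real (pattern_count n l C s' S b)"
    proof (rule mult_left_mono)
      show "(1 - e) * (2 ^ l / 2 ^ r) \<le> real (pattern_count n l C s' S b)"
        using dev[OF s'] unfolding abs_less_iff left_diff_distrib by linarith
    qed (use e in simp)
    finally have "real (pattern_count n l C s S b) / 2 ^ l
        \<le> (1 + e) / (1 - e) * real (pattern_count n l C s' S b) / 2 ^ l"
      by (intro divide_right_mono) simp_all
    then show ?thesis
      by (simp add: K_def pmf_reveal_block)
  qed
  then show ?thesis
    unfolding joint by (rule mutual_info_pmf_bind_Pair_le)
qed

lemma Sem_le_if_balanced_code:
  assumes C: "C \<in> codes n m l" and bal: "balanced_code n m l r e C" and e: "0 < e" "e < 1"
    and r: "r \<le> n"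
  shows "Sem n m l r C \<le> log 2 ((1 + e) / (1 - e))"
proof -
  let ?A = "{(PS, S). set_pmf PS \<subseteq> {..<(2::nat) ^ m} \<and> S \<subseteq> {..<n} \<and> card S = r}"
  have "(return_pmf 0, {..<r}) \<in> ?A"
    using r by simp
  moreover have "mutual_info_pmf (joint_SV n l C (fst p) (snd p)) \<le> log 2 ((1 + e) / (1 - e))"
    if "p \<in> ?A" for p
    using that mutual_info_joint_SV_le_if_balanced_code[OF C bal e, of "fst p" "snd p"]
    by (simp add: mem_Times_iff)
  ultimately show ?thesis
    unfolding Sem_def by (intro cSUP_least) blast+
qed

lemma prob_Sem_le:
  assumes e: "0 < e" "e < 1" and r: "r \<le> n"
  shows "1 - exp ((real m + 2 * real n + 1) * ln 2 - 2 powr (real l - real r) * e\<^sup>2 / 4)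
    \<le> measure_pmf.prob (pmf_of_set (codes n m l)) {C. Sem n m l r C \<le> log 2 ((1 + e) / (1 - e))}"
proof -
  define D where "D = pmf_of_set (codes n m l)"
  have "set_pmf D = codes n m l"
    unfolding D_def by (simp add: finite_codes codes_nonempty)
  have "(2::real) ^ (m + 2 * n) * 2 = 2 powr real (m + 2 * n + 1)"
    by (subst powr_realpow) simp_all
  also have "\<dots> = exp ((real m + 2 * real n + 1) * ln 2)"
    by (simp add: powr_def)
  finally have "2 ^ (m + 2 * n) * (2 * exp (- (2 ^ l / 2 ^ r) * e\<^sup>2 / 4))
      = exp ((real m + 2 * real n + 1) * ln 2) * exp (- (2 powr (real l - real r)) * e\<^sup>2 / 4)"
    by (simp add: powr_diff powr_realpow)
  also have "\<dots> = exp ((real m + 2 * real n + 1) * ln 2 - 2 powr (real l - real r) * e\<^sup>2 / 4)"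
    unfolding exp_add[symmetric] by (simp add: algebra_simps)
  finally have "1 - exp ((real m + 2 * real n + 1) * ln 2 - 2 powr (real l - real r) * e\<^sup>2 / 4)
      \<le> 1 - measure_pmf.prob D {C. \<not> balanced_code n m l r e C}"
    using prob_not_balanced_code[of e n m l r] e unfolding D_def by simp
  also have "\<dots> = measure_pmf.prob D {C. balanced_code n m l r e C}"
    using measure_pmf.prob_compl[of "{C. balanced_code n m l r e C}" D] by (simp add: set_diff_eq)
  also have "measure_pmf.prob D {C. balanced_code n m l r e C}
      = measure_pmf.prob D ({C. balanced_code n m l r e C} \<inter> set_pmf D)"
    by (simp add: measure_Int_set_pmf)
  also have "\<dots> \<le> measure_pmf.prob D {C. Sem n m l r C \<le> log 2 ((1 + e) / (1 - e))}"
    using Sem_le_if_balanced_code[OF _ _ e r] \<open>set_pmf D = codes n m l\<close>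
    by (intro measure_pmf.finite_measure_mono) auto
  finally show ?thesis
    unfolding D_def by simp
qed

lemma prob_Sem_le_at_rates:
  fixes rho lam R e B c :: real and n :: nat
  assumes rates: "0 \<le> rho" "rho \<le> 1" "0 \<le> R" and e: "0 < e" "e < 1"
    and leakage: "log 2 ((1 + e) / (1 - e)) \<le> B"
    and tail: "((R + 2) * real n + 1) * ln 2 - 2 powr ((lam - rho) * real n - 1) * e\<^sup>2 / 4
      \<le> - c * real n"
  shows "let l = nat \<lfloor>lam * real n\<rfloor>; m = nat \<lfloor>R * real n\<rfloor> - l; r = nat \<lfloor>rho * real n\<rfloor> in
    measure_pmf.prob (pmf_of_set (codes n m l)) {C. Sem n m l r C \<le> B} \<ge> 1 - exp (- c * real n)"
proof -
  define l where "l = nat \<lfloor>lam * real n\<rfloor>"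
  define m where "m = nat \<lfloor>R * real n\<rfloor> - l"
  define r where "r = nat \<lfloor>rho * real n\<rfloor>"
  have "real r \<le> rho * real n"
    unfolding r_def using rates by (intro nat_floor_le) simp
  then have "r \<le> n"
    using rates mult_left_le_one_le[of "real n" rho] of_nat_le_iff by fastforce
  have "real m \<le> real (nat \<lfloor>R * real n\<rfloor>)"
    unfolding m_def by simp
  also have "\<dots> \<le> R * real n"
    using rates by (intro nat_floor_le) simp
  finally have "real m \<le> R * real n" .
  have "(lam - rho) * real n - 1 \<le> real l - real r"
    using nat_floor_ge[of "lam * real n"] \<open>real r \<le> rho * real n\<close>
    unfolding l_def by (simp add: algebra_simps)
  then have "2 powr ((lam - rho) * real n - 1) * e\<^sup>2 / 4 \<le> 2 powr (real l - real r) * e\<^sup>2 / 4"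
    by (intro divide_right_mono mult_right_mono) simp_all
  moreover have "(real m + 2 * real n + 1) * ln 2 \<le> ((R + 2) * real n + 1) * ln 2"
    using \<open>real m \<le> R * real n\<close> by (intro mult_right_mono) (simp_all add: algebra_simps)
  ultimately have "(real m + 2 * real n + 1) * ln 2 - 2 powr (real l - real r) * e\<^sup>2 / 4
      \<le> - c * real n"
    using tail by linarith
  then have "1 - exp (- c * real n)
      \<le> 1 - exp ((real m + 2 * real n + 1) * ln 2 - 2 powr (real l - real r) * e\<^sup>2 / 4)"
    by simp
  also have "\<dots> \<le> measure_pmf.prob (pmf_of_set (codes n m l))
      {C. Sem n m l r C \<le> log 2 ((1 + e) / (1 - e))}"
    by (rule prob_Sem_le[OF e \<open>r \<le> n\<close>])
  also have "\<dots> \<le> measure_pmf.prob (pmf_of_set (codes n m l)) {C. Sem n m l r C \<le> B}"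
    using leakage by (intro measure_pmf.finite_measure_mono) auto
  finally show ?thesis
    unfolding Let_def l_def m_def r_def .
qed

theorem mainTheorem7:
  fixes rho R lam :: real
  assumes "0 < rho" "rho < 1" "rho < lam" "lam < R"
  shows "\<exists>\<delta>>0. \<exists>c>0. \<exists>N. \<forall>n\<ge>N.
    (let l = nat \<lfloor>lam * real n\<rfloor>; m = nat \<lfloor>R * real n\<rfloor> - l; r = nat \<lfloor>rho * real n\<rfloor> in
      measure_pmf.prob (pmf_of_set (codes n m l))
        {C. Sem n m l r C \<le> exp (- real n * \<delta>)} \<ge> 1 - exp (- c * real n))"
proof -
  define \<delta> where "\<delta> = (lam - rho) * ln 2 / 8"
  define e where "e n = exp (- 2 * \<delta> * real n)" for n :: nat
  have "0 < lam - rho" "0 < \<delta>"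
    using assms by (simp_all add: \<delta>_def)
  have "\<forall>\<^sub>F n in sequentially. e n < 1 \<and> log 2 ((1 + e n) / (1 - e n)) \<le> exp (- real n * \<delta>)
      \<and> ((R + 2) * real n + 1) * ln 2 - 2 powr ((lam - rho) * real n - 1) * (e n)\<^sup>2 / 4
        \<le> - 1 * real n" (is "eventually ?good _")
    unfolding e_def \<delta>_def using \<open>0 < lam - rho\<close> assms by (intro eventually_conj) real_asymp+
  then obtain N where N: "\<And>n. N \<le> n \<Longrightarrow> ?good n"
    unfolding eventually_sequentially by blast
  have "let l = nat \<lfloor>lam * real n\<rfloor>; m = nat \<lfloor>R * real n\<rfloor> - l; r = nat \<lfloor>rho * real n\<rfloor> in
      measure_pmf.prob (pmf_of_set (codes n m l))
        {C. Sem n m l r C \<le> exp (- real n * \<delta>)} \<ge> 1 - exp (- 1 * real n)" if "N \<le> n" for n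
    using N[OF that] assms by (intro prob_Sem_le_at_rates[where e = "e n"]) (simp_all add: e_def)
  then show ?thesis
    using \<open>0 < \<delta>\<close> by (intro exI[of _ \<delta>] conjI exI[of _ "1::real"] exI[of _ N] allI impI) auto
qed

end
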